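(* Let $G=(V,E,\mathbf{X})$ be a finite graph with node features $\mathbf{X}[v]\in\mathbb{R}^t$ for $v\in V$, and let $G_1=(V_1,E_1,\mathbf{X}_1),\dots,G_q=(V_q,E_q,\mathbf{X}_q)$ be the subgraphs produced from $G$ by a subgraph generation policy, where $V_j\subseteq V$ and $\mathbf{X}_j[v]\in\mathbb{R}^t$. Fix $L\ge 1$ message-passing layers $\mathtt{MPNN}_1,\dots,\mathtt{MPNN}_L$ (with aggregate functions $AGG_i$ and combine functions $COM_i$) and a pooling function $\mathtt{pool}$. Conventional subgraph GNN: for each $j$, set $\mathbf{H}_j^{(0)}=\mathbf{X}_j$ and for $1\le i\le L$, $v\in V_j$, $\mathbf{H}_j^{(i)}[v]=COM_i\big(AGG_i(\{\!\{\mathbf{H}_j^{(i-1)}[u]:u\in\mathcal{N}_j(v)\}\!\}),\mathbf{H}_j^{(i-1)}[v]\big)$; the output is $Y=\mathtt{pool}(\mathbf{H}_1^{(L)},\dots,\mathbf{H}_q^{(L)})$. ENFA: set $\mathbf{H}_o^{(0)}=\mathbf{X}$ and $\widehat{\mathbf{H}}_j^{(0)}=\mathbf{X}_j$. For $1\le i\le L$: compute $\mathbf{H}_o^{(i)}$ by applying $\mathtt{MPNN}_i$ to $\mathbf{H}_o^{(i-1)}$ on the original graph $G$ (neighborhoods $\mathcal{N}(v)$); for each $j$, compute $\widehat{\mathbf{H}}_j^{(i)}$ by applying $\mathtt{MPNN}_i$ to $\widehat{\mathbf{H}}_j^{(i-1)}$ on the $(L+1)$-hop ego net $G_j^{L+1}$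 of $\mathtt{pvt}(G_j)$ in $G_j$ (nodes of $V_j$ not in this ego net have no neighbors); then for every $v\in V_j$ with $\mathtt{phop}_j(v)>i$ overwrite $\widehat{\mathbf{H}}_j^{(i)}[v]:=\mathbf{H}_o^{(i)}[v]$. The ENFA output is $\widehat{Y}=\mathtt{pool}(\widehat{\mathbf{H}}_1^{(L)},\dots,\widehat{\mathbf{H}}_q^{(L)})$. Then for every $j\in\{1,\dots,q\}$ and every node $v$ of the ego net $G_j^{L+1}$, $\widehat{\mathbf{H}}_j^{(L)}[v]=\mathbf{H}_j^{(L)}[v]$; consequently $\widehat{Y}=Y$.
   Context: $\mathcal{N}(v)$ denotes the neighbors of $v$ in $G$ and $\mathcal{N}_j(v)$ the neighbors of $v$ in $G_j$; $\{\!\{\cdot\}\!\}$ denotes a multiset. The pivot nodes of $G_j$ are $\mathtt{pvt}(G_j)=\{v\in V_j:\mathcal{N}(v)\ne\mathcal{N}_j(v)\text{ or }\mathbf{X}[v]\ne\mathbf{X}_j[v]\}$, i.e. the nodes whose neighborhood or features differ between $G_j$ and $G$. The pivot hop of $v\in V_j$ is $\mathtt{phop}_j(v)=\min\{\mathtt{hop}^j(v,w):w\in\mathtt{pvt}(G_j)\}$, where $\mathtt{hop}^j$ is the shortest-path distance in $G_j$ (the minimum over an empty set is $+\infty$). The $h$-hop ego net $G_j^{h}$ of $\mathtt{pvt}(G_j)$ in $G_j$ is the subgraph of $G_j$ induced on the nodes $v\in V_j$ with $\mathtt{phop}_j(v)\le h$, with features inherited from $\mathbf{X}_j$. Examples of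 policies: node-marking (each subgraph is $G$ with an extra feature column marking one root node, the original graph being taken with that column equal to zero), node-deleting (delete one node and its incident edges), edge-deleting (delete one edge). The same layers $\mathtt{MPNN}_i$ (same parameters) are used on $G$ and on all subgraphs. *)

theory Defs
  imports Main "HOL-Library.Multiset" "HOL-Library.Extended_Nat" "HOL-Library.FuncSet"
begin

text \<open>Graphs are given by a node set and a neighbourhood function N :: 'v => 'v set.\<close>

definition adj :: "('v \<Rightarrow> 'v set) \<Rightarrow> 'v \<Rightarrow> 'v \<Rightarrow> bool" where
  "adj N a b \<longleftrightarrow> b \<in> N a"

text \<open>Shortest-path (hop) distance; infinity if unreachable.\<close>
definition hop :: "('v \<Rightarrow> 'v set) \<Rightarrow> 'v \<Rightarrow> 'v \<Rightarrow> enat" where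
  "hop N v w = (INF n \<in> {n. (adj N ^^ n) v w}. enat n)"

definition pvt :: "('v \<Rightarrow> 'v set) \<Rightarrow> ('v \<Rightarrow> 'f) \<Rightarrow> 'v set \<Rightarrow> ('v \<Rightarrow> 'v set) \<Rightarrow> ('v \<Rightarrow> 'f) \<Rightarrow> 'v set" where
  "pvt N X Vj Nj Xj = {v \<in> Vj. N v \<noteq> Nj v \<or> X v \<noteq> Xj v}"

text \<open>Pivot hop (min over empty set = infinity).\<close>
definition phop :: "('v \<Rightarrow> 'v set) \<Rightarrow> ('v \<Rightarrow> 'f) \<Rightarrow> 'v set \<Rightarrow> ('v \<Rightarrow> 'v set) \<Rightarrow> ('v \<Rightarrow> 'f) \<Rightarrow> 'v \<Rightarrow> enat" where
  "phop N X Vj Nj Xj v = (INF w \<in> pvt N X Vj Nj Xj. hop Nj v w)"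

definition ego :: "('v \<Rightarrow> 'v set) \<Rightarrow> ('v \<Rightarrow> 'f) \<Rightarrow> 'v set \<Rightarrow> ('v \<Rightarrow> 'v set) \<Rightarrow> ('v \<Rightarrow> 'f) \<Rightarrow> nat \<Rightarrow> 'v set" where
  "ego N X Vj Nj Xj h = {v \<in> Vj. phop N X Vj Nj Xj v \<le> enat h}"

definition egoN :: "('v \<Rightarrow> 'v set) \<Rightarrow> ('v \<Rightarrow> 'f) \<Rightarrow> 'v set \<Rightarrow> ('v \<Rightarrow> 'v set) \<Rightarrow> ('v \<Rightarrow> 'f) \<Rightarrow> nat \<Rightarrow> 'v \<Rightarrow> 'v set" where
  "egoN N X Vj Nj Xj h v =
     (if v \<in> ego N X Vj Nj Xj h then Nj v \<inter> ego N X Vj Nj Xj h else {})"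

text \<open>Stacked message passing: layer i (1 <= i) uses agg i and com i.
  mpnn agg com N X i is the representation H^(i).\<close>
fun mpnn :: "(nat \<Rightarrow> 'f multiset \<Rightarrow> 'a) \<Rightarrow> (nat \<Rightarrow> 'a \<Rightarrow> 'f \<Rightarrow> 'f) \<Rightarrow> ('v \<Rightarrow> 'v set)
             \<Rightarrow> ('v \<Rightarrow> 'f) \<Rightarrow> nat \<Rightarrow> 'v \<Rightarrow> 'f" where
  "mpnn agg com N X 0 = X"
| "mpnn agg com N X (Suc i) =
     (\<lambda>v. com (Suc i) (agg (Suc i) (image_mset (mpnn agg com N X i) (mset_set (N v))))
                     (mpnn agg com N X i v))"

fun enfa :: "(nat \<Rightarrow> 'f multiset \<Rightarrow> 'a) \<Rightarrow> (nat \<Rightarrow> 'a \<Rightarrow> 'f \<Rightarrow> 'f) \<Rightarrow> nat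
             \<Rightarrow> ('v \<Rightarrow> 'v set) \<Rightarrow> ('v \<Rightarrow> 'f) \<Rightarrow> 'v set \<Rightarrow> ('v \<Rightarrow> 'v set) \<Rightarrow> ('v \<Rightarrow> 'f)
             \<Rightarrow> nat \<Rightarrow> 'v \<Rightarrow> 'f" where
  "enfa agg com L N X Vj Nj Xj 0 = Xj"
| "enfa agg com L N X Vj Nj Xj (Suc i) =
     (\<lambda>v. if v \<in> Vj \<and> phop N X Vj Nj Xj v > enat (Suc i)
          then mpnn agg com N X (Suc i) v
          else com (Suc i)
                 (agg (Suc i) (image_mset (enfa agg com L N X Vj Nj Xj i)
                                (mset_set (egoN N X Vj Nj Xj (L + 1) v))))
                 (enfa agg com L N X Vj Nj Xj i v))"

end

theory Submission
  imports Defs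
begin

text \<open>
  After i layers, message passing at a node depends only on the features and neighbourhoods
  within i hops of it. A node of G_j whose pivot hop exceeds i sees the same i-hop
  neighbourhood in G and in G_j, so overwriting its ENFA state with the state computed on G
  changes nothing. A node within i \<le> L hops of a pivot has all its neighbours in the
  (L+1)-hop ego net, so message passing on the ego net coincides there with message passing on
  G_j. Induction on the layer shows that ENFA agrees with the subgraph GNN on all of V_j;
  only the hypotheses on the subgraphs are needed.
\<close>

lemma INF_le_enat_iff:
  fixes f :: "'b \<Rightarrow> enat"
  shows "(INF x\<in>A. f x) \<le> enat k \<longleftrightarrow> (\<exists>x\<in>A. f x \<le> enat k)"
proof
  assume "(INF x\<in>A. f x) \<le> enat k"
  then have "\<exists>x\<in>A. f x < enat (Suc k)"
    unfolding INF_le_iff by auto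
  then show "\<exists>x\<in>A. f x \<le> enat k"
    by (metis Suc_ile_eq order_le_less linorder_not_less)
qed (meson INF_lower2)

lemma hop_le_enat_iff: "hop N v w \<le> enat k \<longleftrightarrow> (\<exists>n\<le>k. (adj N ^^ n) v w)"
  unfolding hop_def INF_le_enat_iff by auto

lemma phop_le_enat_iff:
  "phop N X Vj Nj Xj v \<le> enat k \<longleftrightarrow> (\<exists>w\<in>pvt N X Vj Nj Xj. hop Nj v w \<le> enat k)"
  unfolding phop_def INF_le_enat_iff ..

lemma phop_le_Suc_if_neighbour:
  assumes "u \<in> Nj v" and "phop N X Vj Nj Xj u \<le> enat k"
  shows "phop N X Vj Nj Xj v \<le> enat (Suc k)"
proof -
  have "adj Nj v u" using assms(1) by (simp add: adj_def)
  then show ?thesis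
    using assms(2) unfolding phop_le_enat_iff hop_le_enat_iff
    by (meson Suc_le_mono relpowp_Suc_I2)
qed

lemma not_pvt_if_phop_gt:
  assumes "enat k < phop N X Vj Nj Xj v"
  shows "v \<notin> pvt N X Vj Nj Xj"
proof
  assume "v \<in> pvt N X Vj Nj Xj"
  then have "phop N X Vj Nj Xj v \<le> enat k"
    unfolding phop_le_enat_iff hop_le_enat_iff by (meson le0 relpowp_0_I)
  with assms show False by simp
qed

lemma image_mset_mset_set_cong:
  "(\<And>x. x \<in> A \<Longrightarrow> f x = g x) \<Longrightarrow> image_mset f (mset_set A) = image_mset g (mset_set A)"
  by (cases "finite A") (auto intro: image_mset_cong)

lemma mpnn_eq_if_phop_gt:
  assumes Nj_sub: "\<forall>v\<in>Vj. Nj v \<subseteq> Vj"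
  shows "v \<in> Vj \<Longrightarrow> enat i < phop N X Vj Nj Xj v \<Longrightarrow>
    mpnn agg com N X i v = mpnn agg com Nj Xj i v"
proof (induction i arbitrary: v)
  case 0
  then show ?case using not_pvt_if_phop_gt[OF 0(2)] by (auto simp: pvt_def)
next
  case (Suc i)
  have same_nbhd: "N v = Nj v"
    using not_pvt_if_phop_gt[OF Suc.prems(2)] Suc.prems(1) by (auto simp: pvt_def)
  have "mpnn agg com N X i u = mpnn agg com Nj Xj i u" if "u \<in> Nj v" for u
  proof (rule Suc.IH)
    show "u \<in> Vj" using that Nj_sub Suc.prems(1) by blast
    show "enat i < phop N X Vj Nj Xj u"
      using phop_le_Suc_if_neighbour[where Nj = Nj, OF that] Suc.prems(2) by (meson linorder_not_less)
  qed
  then have nbhd: "image_mset (mpnn agg com N X i) (mset_set (N v))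
      = image_mset (mpnn agg com Nj Xj i) (mset_set (Nj v))"
    unfolding same_nbhd by (rule image_mset_mset_set_cong)
  have "mpnn agg com N X i v = mpnn agg com Nj Xj i v"
    using Suc.IH Suc.prems by (meson Suc_ile_eq order_less_imp_le)
  then show ?case by (simp only: mpnn.simps(2) nbhd)
qed

lemma egoN_Suc_eq_if_phop_le:
  assumes Nj_sub: "\<forall>v\<in>Vj. Nj v \<subseteq> Vj"
    and Nj_sym: "\<forall>u\<in>Vj. \<forall>v\<in>Vj. u \<in> Nj v \<longleftrightarrow> v \<in> Nj u"
    and v: "v \<in> Vj" and near: "phop N X Vj Nj Xj v \<le> enat h"
  shows "egoN N X Vj Nj Xj (Suc h) v = Nj v"
proof -
  have "v \<in> ego N X Vj Nj Xj (Suc h)"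
    using v near by (simp add: ego_def order_trans)
  moreover have "u \<in> ego N X Vj Nj Xj (Suc h)" if "u \<in> Nj v" for u
  proof -
    have "u \<in> Vj" using that Nj_sub v by blast
    moreover have "v \<in> Nj u" using Nj_sym \<open>u \<in> Vj\<close> v that by blast
    ultimately show ?thesis
      using phop_le_Suc_if_neighbour[OF _ near] by (simp add: ego_def)
  qed
  ultimately show ?thesis by (auto simp: egoN_def)
qed

lemma enfa_eq_mpnn:
  assumes Nj_sub: "\<forall>v\<in>Vj. Nj v \<subseteq> Vj"
    and Nj_sym: "\<forall>u\<in>Vj. \<forall>v\<in>Vj. u \<in> Nj v \<longleftrightarrow> v \<in> Nj u"
  shows "i \<le> L \<Longrightarrow> v \<in> Vj \<Longrightarrow> enfa agg com L N X Vj Nj Xj i v = mpnn agg com Nj Xj i v"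
proof (induction i arbitrary: v)
  case 0
  then show ?case by simp
next
  case (Suc i)
  show ?case
  proof (cases "enat (Suc i) < phop N X Vj Nj Xj v")
    case True
    then show ?thesis
      using Suc.prems mpnn_eq_if_phop_gt[OF Nj_sub] by (simp del: mpnn.simps)
  next
    case False
    then have "phop N X Vj Nj Xj v \<le> enat L"
      using Suc.prems(1) by (meson enat_ord_simps(1) linorder_not_less order_trans)
    then have ego_nbhd: "egoN N X Vj Nj Xj (Suc L) v = Nj v"
      by (rule egoN_Suc_eq_if_phop_le[OF Nj_sub Nj_sym Suc.prems(2)])
    have "enfa agg com L N X Vj Nj Xj i u = mpnn agg com Nj Xj i u" if "u \<in> Nj v \<or> u = v" for u
      using that Suc.IH Suc.prems Nj_sub by auto
    then have "image_mset (enfa agg com L N X Vj Nj Xj i) (mset_set (Nj v))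
          = image_mset (mpnn agg com Nj Xj i) (mset_set (Nj v))"
        and "enfa agg com L N X Vj Nj Xj i v = mpnn agg com Nj Xj i v"
      by (auto intro: image_mset_mset_set_cong)
    then show ?thesis using False by (simp add: ego_nbhd)
  qed
qed

theorem theorem1:
  fixes V :: "'v set" and N :: "'v \<Rightarrow> 'v set" and X :: "'v \<Rightarrow> 'f"
    and q :: nat and Vs :: "nat \<Rightarrow> 'v set" and Ns :: "nat \<Rightarrow> 'v \<Rightarrow> 'v set"
    and Xs :: "nat \<Rightarrow> 'v \<Rightarrow> 'f"
    and L :: nat
    and agg :: "nat \<Rightarrow> 'f multiset \<Rightarrow> 'a" and com :: "nat \<Rightarrow> 'a \<Rightarrow> 'f \<Rightarrow> 'f"
    and pool :: "('v \<Rightarrow> 'f) list \<Rightarrow> 'o"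
  assumes finV: "finite V"
    and N_sub: "\<forall>v\<in>V. N v \<subseteq> V"
    and N_sym: "\<forall>u\<in>V. \<forall>v\<in>V. u \<in> N v \<longleftrightarrow> v \<in> N u"
    and Vs_sub: "\<forall>j\<in>{1..q}. Vs j \<subseteq> V"
    and Ns_sub: "\<forall>j\<in>{1..q}. \<forall>v\<in>Vs j. Ns j v \<subseteq> Vs j"
    and Ns_sym: "\<forall>j\<in>{1..q}. \<forall>u\<in>Vs j. \<forall>v\<in>Vs j. u \<in> Ns j v \<longleftrightarrow> v \<in> Ns j u"
    and L_pos: "L \<ge> 1"
  shows "(\<forall>j\<in>{1..q}. \<forall>v\<in>ego N X (Vs j) (Ns j) (Xs j) (L + 1).
            enfa agg com L N X (Vs j) (Ns j) (Xs j) L v = mpnn agg com (Ns j) (Xs j) L v)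
       \<and> pool (map (\<lambda>j. restrict (enfa agg com L N X (Vs j) (Ns j) (Xs j) L) (Vs j)) [1..<q+1])
         = pool (map (\<lambda>j. restrict (mpnn agg com (Ns j) (Xs j) L) (Vs j)) [1..<q+1])"
proof -
  have on_Vs: "enfa agg com L N X (Vs j) (Ns j) (Xs j) L v = mpnn agg com (Ns j) (Xs j) L v"
    if "j \<in> {1..q}" "v \<in> Vs j" for j v
    using enfa_eq_mpnn[of "Vs j" "Ns j" L L v] Ns_sub Ns_sym that by simp
  then have pooled_args: "map (\<lambda>j. restrict (enfa agg com L N X (Vs j) (Ns j) (Xs j) L) (Vs j)) [1..<q+1]
      = map (\<lambda>j. restrict (mpnn agg com (Ns j) (Xs j) L) (Vs j)) [1..<q+1]"
    by (intro map_cong refl) (auto intro!: restrict_ext)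
  show ?thesis unfolding pooled_args using on_Vs by (auto simp: ego_def)
qed

end
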